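(* Let $\mathbb{F}$ be any field and $n$ a positive integer, and let $M\in\mathbb{F}^{2^n\times2^n}$ be either (i) $M=V_f$ for an arbitrary function $f:\{0,1\}^n\to\mathbb{F}$, or (ii) $M=M_1\otimes M_2\otimes\cdots\otimes M_n$ for arbitrary $M_1,\dots,M_n\in\mathbb{F}^{2\times2}$. Then for every integer $1\le k\le n$, $\mathcal{R}^{rc}_M\big(4\binom{n}{<k}\big)\le\binom{n-k}{\le n-2k}^2$ over $\mathbb{F}$.
   Context: $V_f[x,y]=f(x\vee y)$ for $x,y\in\{0,1\}^n$, with $\vee$ the bitwise OR. Row/column rigidity: $\mathcal{R}^{rc}_A(r)=\min\{\max(\mathrm{nnz_r}(B),\mathrm{nnz_c}(B)):\mathrm{rank}(A+B)\le r\}$, where $\mathrm{nnz_r}$, $\mathrm{nnz_c}$ are the maximum numbers of nonzero entries in a row, resp. column. $\binom{n}{<k}=\sum_{i=0}^{k-1}\binom{n}{i}$, $\binom{m}{\le j}=\sum_{i=0}^{j}\binom{m}{i}$ (empty sum $=0$). *)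

theory Defs
  imports "Jordan_Normal_Form.DL_Rank"
begin

definition mrank :: "'a::field mat \<Rightarrow> nat" where
  "mrank A = vec_space.rank (dim_row A) A"

definition nnz_r :: "'a::zero mat \<Rightarrow> nat" where
  "nnz_r B = Max ({card {j. j < dim_col B \<and> B $$ (i, j) \<noteq> 0} | i. i < dim_row B} \<union> {0})"

definition nnz_c :: "'a::zero mat \<Rightarrow> nat" where
  "nnz_c B = Max ({card {i. i < dim_row B \<and> B $$ (i, j) \<noteq> 0} | j. j < dim_col B} \<union> {0})"

definition rc_rigidity :: "'a::field mat \<Rightarrow> nat \<Rightarrow> nat" where
  "rc_rigidity A r = Inf {max (nnz_r B) (nnz_c B) | B.
      B \<in> carrier_mat (dim_row A) (dim_col A) \<and> mrank (A + B) \<le> r}"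

text \<open>V_f: rows/columns indexed by 0..2^n-1, read as bit vectors in {0,1}^n;
  bitwise OR of the indices is the join x \<or> y.\<close>
definition V_mat :: "nat \<Rightarrow> (nat \<Rightarrow> 'a) \<Rightarrow> 'a mat" where
  "V_mat n f = mat (2^n) (2^n) (\<lambda>(i, j). f (Bit_Operations.or i j))"

definition kron_mat :: "'a::times mat \<Rightarrow> 'a mat \<Rightarrow> 'a mat" where
  "kron_mat A B = mat (dim_row A * dim_row B) (dim_col A * dim_col B)
     (\<lambda>(i, j). A $$ (i div dim_row B, j div dim_col B) * B $$ (i mod dim_row B, j mod dim_col B))"

definition kron_list :: "'a::semiring_1 mat list \<Rightarrow> 'a mat" where
  "kron_list Ms = foldr kron_mat Ms (1\<^sub>m 1)"

definition binom_lt :: "nat \<Rightarrow> nat \<Rightarrow> nat" where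
  "binom_lt n k = (\<Sum>i<k. n choose i)"

text \<open>sum_{i=0}^{j} (m choose i), empty (=0) for j < 0.\<close>
definition binom_le :: "nat \<Rightarrow> int \<Rightarrow> nat" where
  "binom_le m j = (\<Sum>i\<in>{0..j}. m choose nat i)"

end

theory Submission
  imports Defs
begin

text \<open>Both kinds of matrices factor as M = P Q through 2^n inner indices t, where P x t vanishes
  unless the coordinates on which x agrees with a fixed bit pattern are disjoint from those on
  which t agrees with another, and similarly for Q t y. For V_f the inner index runs over the
  subsets of the zero set of x \<or> y (Moebius inversion on the Boolean lattice); for a Kronecker
  product it comes from an LU-type factorization of each 2 \<times> 2 factor. Call an index light
  if its agreement set has fewer than k elements. The terms through a light row, a light inner
  index or a light column form a matrix of rank at most 3 binom(n, < k). In the remaining terms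
  an index is only paired with heavy indices whose agreement sets avoid its own, and there are
  at most binom(n - k, \<le> n - 2k) of those, so the remaining part of P Q has at most the square
  of that many nonzero entries in each row and column.\<close>

section \<open>Agreement sets\<close>

definition agree_set :: "nat \<Rightarrow> (nat \<Rightarrow> bool) \<Rightarrow> nat \<Rightarrow> nat set" where
  "agree_set n a x = {i. i < n \<and> bit x i = a i}"

lemma bit_imp_less_of_less_power2: "(x::nat) < 2 ^ n \<Longrightarrow> bit x i \<Longrightarrow> i < n"
  by (metis bit_take_bit_iff take_bit_nat_eq_self)

lemma agree_set_subset: "agree_set n a x \<subseteq> {..<n}"
  by (auto simp: agree_set_def)

lemma inj_on_agree_set: "inj_on (agree_set n a) {..<2 ^ n}"
proof (rule inj_onI)
  fix x y assume x: "x \<in> {..<(2::nat) ^ n}" and y: "y \<in> {..<(2::nat) ^ n}"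
    and eq: "agree_set n a x = agree_set n a y"
  have "bit x i = bit y i" for i
  proof (cases "i < n")
    case True
    then show ?thesis using eq by (auto simp: agree_set_def set_eq_iff)
  next
    case False
    then show ?thesis using bit_imp_less_of_less_power2 x y by auto
  qed
  then show "x = y" by (simp add: bit_eq_iff)
qed

lemma agree_set_image: "agree_set n a ` {..<2 ^ n} = Pow {..<n}"
proof (rule card_subset_eq)
  show "agree_set n a ` {..<2 ^ n} \<subseteq> Pow {..<n}" using agree_set_subset by auto
  show "card (agree_set n a ` {..<2 ^ n}) = card (Pow {..<n})"
    by (simp add: card_image[OF inj_on_agree_set] card_Pow)
qed simp

lemma agree_set_image_filter:
  "agree_set n a ` {x\<in>{..<2 ^ n}. R (agree_set n a x)} = {S\<in>Pow {..<n}. R S}"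
proof
  show "agree_set n a ` {x\<in>{..<2 ^ n}. R (agree_set n a x)} \<subseteq> {S\<in>Pow {..<n}. R S}"
    using agree_set_subset by auto
  show "{S\<in>Pow {..<n}. R S} \<subseteq> agree_set n a ` {x\<in>{..<2 ^ n}. R (agree_set n a x)}"
  proof
    fix S assume S: "S \<in> {S\<in>Pow {..<n}. R S}"
    then have "S \<in> agree_set n a ` {..<2 ^ n}" by (simp add: agree_set_image)
    then show "S \<in> agree_set n a ` {x\<in>{..<2 ^ n}. R (agree_set n a x)}" using S by auto
  qed
qed

lemma sum_Pow_eq_sum_agree_set:
  assumes "W \<subseteq> {..<n}"
  shows "(\<Sum>T\<in>Pow W. G T)
    = (\<Sum>t<2 ^ n. if agree_set n a t \<subseteq> W then G (agree_set n a t) else 0)"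
proof -
  have "Pow W = agree_set n a ` {t\<in>{..<2 ^ n}. agree_set n a t \<subseteq> W}"
    using assms agree_set_image_filter[of n a "\<lambda>S. S \<subseteq> W"] by auto
  then have "(\<Sum>T\<in>Pow W. G T)
      = (\<Sum>t\<in>{t\<in>{..<2 ^ n}. agree_set n a t \<subseteq> W}. G (agree_set n a t))"
    by (simp only:) (rule sum.reindex_cong[OF inj_on_subset[OF inj_on_agree_set]], auto)
  also have "\<dots> = (\<Sum>t<2 ^ n. if agree_set n a t \<subseteq> W then G (agree_set n a t) else 0)"
    by (rule sum.inter_filter) simp
  finally show ?thesis .
qed

lemma card_filter_agree_set:
  "card {x\<in>{..<2 ^ n}. R (agree_set n a x)} = card {S\<in>Pow {..<n}. R S}"
  by (subst agree_set_image_filter[symmetric], rule card_image[symmetric])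
     (rule inj_on_subset[OF inj_on_agree_set], auto)

lemma card_Pow_filter_card_less:
  assumes "finite W"
  shows "card {S\<in>Pow W. card S < k} = (\<Sum>i<k. card W choose i)"
proof -
  have "{S\<in>Pow W. card S < k} = (\<Union>i<k. {S. S \<subseteq> W \<and> card S = i})" by auto
  also have "card \<dots> = (\<Sum>i<k. card {S. S \<subseteq> W \<and> card S = i})"
    by (rule card_UN_disjoint) (use assms in auto)
  finally show ?thesis using n_subsets[OF assms] by simp
qed

lemma card_Pow_filter_card_le:
  assumes "finite W"
  shows "card {S\<in>Pow W. card S \<le> j} = (\<Sum>i\<le>j. card W choose i)"
  using card_Pow_filter_card_less[OF assms, of "Suc j"]
  by (simp add: less_Suc_eq_le lessThan_Suc_atMost)

lemma card_agree_set_less: "card {x\<in>{..<2 ^ n}. card (agree_set n a x) < k} = binom_lt n k"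
  using card_filter_agree_set[of n "\<lambda>S. card S < k" a] card_Pow_filter_card_less[of "{..<n}" k]
  by (simp add: binom_lt_def)

lemma binom_le_of_nat: "binom_le m (int j) = (\<Sum>i\<le>j. m choose i)"
proof -
  have "{0..int j} = int ` {..j}" by (auto simp: image_iff intro!: bexI[of _ "nat _"])
  then show ?thesis
    by (simp add: binom_le_def sum.reindex)
qed

lemma card_Pow_filter_card_ge_le:
  assumes "finite W"
  shows "card {S\<in>Pow W. k \<le> card S} \<le> (\<Sum>i\<le>card W - k. card W choose i)"
proof -
  have "inj_on (\<lambda>S. W - S) {S\<in>Pow W. k \<le> card S}" by (auto simp: inj_on_def)
  then have "card {S\<in>Pow W. k \<le> card S} = card ((\<lambda>S. W - S) ` {S\<in>Pow W. k \<le> card S})"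
    by (simp add: card_image)
  also have "\<dots> \<le> card {S\<in>Pow W. card S \<le> card W - k}"
    by (rule card_mono) (use assms in \<open>auto simp: card_Diff_subset finite_subset\<close>)
  finally have "card {S\<in>Pow W. k \<le> card S} \<le> card {S\<in>Pow W. card S \<le> card W - k}" .
  then show ?thesis using card_Pow_filter_card_le[OF assms] by simp
qed

text \<open>Such agreement sets lie in {..<n} - U, which has at most n - k elements, and complementing
  them there gives sets of at most n - 2k elements.\<close>
lemma card_heavy_agree_set_disjoint_le:
  assumes "U \<subseteq> {..<n}" and "k \<le> card U"
  shows "card {x\<in>{..<2 ^ n}. k \<le> card (agree_set n a x) \<and> agree_set n a x \<inter> U = {}}
     \<le> binom_le (n - k) (int n - 2 * int k)"
proof -
  define W where "W = {..<n} - U"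
  have card_W: "card W = n - card U"
    using assms(1) by (simp add: W_def card_Diff_subset finite_subset)
  have "card {x\<in>{..<2 ^ n}. k \<le> card (agree_set n a x) \<and> agree_set n a x \<inter> U = {}}
      = card {S\<in>Pow W. k \<le> card S}"
    unfolding card_filter_agree_set[of n "\<lambda>S. k \<le> card S \<and> S \<inter> U = {}"]
    by (rule arg_cong[of _ _ card]) (auto simp: W_def)
  also have "\<dots> \<le> binom_le (n - k) (int n - 2 * int k)"
  proof (cases "k \<le> card W")
    case False
    then have "{S\<in>Pow W. k \<le> card S} = {}"
      by (auto dest: card_mono[rotated] simp: W_def)
    then show ?thesis by (metis card.empty le0)
  next
    case True
    have "card U \<le> n" using card_mono[OF _ assms(1)] by simp
    then have n2k: "2 * k \<le> n" using True card_W assms(2) by linarith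
    have "card {S\<in>Pow W. k \<le> card S} \<le> (\<Sum>i\<le>card W - k. card W choose i)"
      by (rule card_Pow_filter_card_ge_le) (simp add: W_def)
    also have "\<dots> \<le> (\<Sum>i\<le>n - 2 * k. card W choose i)"
      by (rule sum_mono2) (use card_W assms(2) in auto)
    also have "\<dots> \<le> (\<Sum>i\<le>n - 2 * k. (n - k) choose i)"
      by (intro sum_mono binomial_right_mono) (use card_W assms(2) in auto)
    also have "\<dots> = binom_le (n - k) (int n - 2 * int k)"
      using binom_le_of_nat[of "n - k" "n - 2 * k"] n2k by simp
    finally show ?thesis .
  qed
  finally show ?thesis .
qed

section \<open>Rank and sparsity bounds\<close>

lemma mrank_add_le:
  assumes "A \<in> carrier_mat m c" and "B \<in> carrier_mat m c"
  shows "mrank (A + B) \<le> mrank A + mrank B"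
  using vec_space.rank_subadditive[OF assms] assms by (simp add: mrank_def)

lemma mrank_sum_outer_products_le:
  fixes f g :: "'b \<Rightarrow> nat \<Rightarrow> 'a::field"
  assumes "finite T"
  shows "mrank (mat m c (\<lambda>(i, j). \<Sum>t\<in>T. f t i * g t j)) \<le> card T"
  using assms
proof (induction T rule: finite_induct)
  case empty
  have zero: "mat m c (\<lambda>(i, j). \<Sum>t\<in>{}. f t i * g t j) = 0\<^sub>m m c" by (intro eq_matI) auto
  show ?case unfolding zero mrank_def using vec_space.rank_0I[of m c] by simp
next
  case (insert t T)
  define R where "R = mat m c (\<lambda>(i, j). f t i * g t j)"
  have "mat m c (\<lambda>(i, j). \<Sum>s\<in>insert t T. f s i * g s j)
      = mat m c (\<lambda>(i, j). \<Sum>s\<in>T. f s i * g s j) + R"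
    using insert.hyps by (intro eq_matI) (auto simp: R_def add.commute)
  moreover have "mrank R \<le> 1"
    using vec_space.rank_le_1_product_entries[of R m c "f t" "g t"] by (auto simp: R_def mrank_def)
  ultimately show ?case
    using mrank_add_le[of "mat m c (\<lambda>(i, j). \<Sum>s\<in>T. f s i * g s j)" m c R] insert
    by (auto simp: R_def)
qed

lemma mrank_le_card_rows:
  fixes F :: "nat \<Rightarrow> nat \<Rightarrow> 'a::field"
  assumes "finite R"
  shows "mrank (mat m c (\<lambda>(i, j). if i \<in> R then F i j else 0)) \<le> card R"
proof -
  have entry: "(\<Sum>r\<in>R. (if i = r then 1 else 0) * F r j) = (if i \<in> R then F i j else 0)" for i j
  proof -
    have "(\<Sum>r\<in>R. (if i = r then 1 else 0) * F r j) = (\<Sum>r\<in>R. if i = r then F r j else 0)"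
      by (rule sum.cong) auto
    then show ?thesis using assms by simp
  qed
  have "mat m c (\<lambda>(i, j). if i \<in> R then F i j else 0)
      = mat m c (\<lambda>(i, j). \<Sum>r\<in>R. (if i = r then 1 else 0) * F r j)"
    by (rule eq_matI) (simp_all add: entry)
  then show ?thesis
    using mrank_sum_outer_products_le[OF assms, of m c "\<lambda>r i. if i = r then 1 else 0" F] by simp
qed

lemma mrank_le_card_cols:
  fixes F :: "nat \<Rightarrow> nat \<Rightarrow> 'a::field"
  assumes "finite L"
  shows "mrank (mat m c (\<lambda>(i, j). if j \<in> L then F i j else 0)) \<le> card L"
proof -
  have entry: "(\<Sum>r\<in>L. F i r * (if j = r then 1 else 0)) = (if j \<in> L then F i j else 0)" for i j
  proof -
    have "(\<Sum>r\<in>L. F i r * (if j = r then 1 else 0)) = (\<Sum>r\<in>L. if j = r then F i r else 0)"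
      by (rule sum.cong) auto
    then show ?thesis using assms by simp
  qed
  have "mat m c (\<lambda>(i, j). if j \<in> L then F i j else 0)
      = mat m c (\<lambda>(i, j). \<Sum>r\<in>L. F i r * (if j = r then 1 else 0))"
    by (rule eq_matI) (simp_all add: entry)
  then show ?thesis
    using mrank_sum_outer_products_le[OF assms, of m c "\<lambda>r i. F i r" "\<lambda>r j. if j = r then 1 else 0"]
    by simp
qed

text \<open>Removing from a product P Q the terms in which the row, the inner index and the
  column are all heavy leaves the sum of the light rows, the rank-one terms through light
  inner indices and the light columns.\<close>
lemma mrank_product_minus_heavy_part_le:
  fixes P Q :: "nat \<Rightarrow> nat \<Rightarrow> 'a::field"
  assumes M: "M \<in> carrier_mat N N"
    and M_eq: "\<And>x y. x < N \<Longrightarrow> y < N \<Longrightarrow> M $$ (x, y) = (\<Sum>t<N. P x t * Q t y)"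
  shows "mrank (M + mat N N (\<lambda>(x, y). - (\<Sum>t<N.
            (if hr x \<and> hm t then P x t else 0) * (if hm t \<and> hc y then Q t y else 0))))
     \<le> card {x\<in>{..<N}. \<not> hr x} + card {t\<in>{..<N}. \<not> hm t} + card {y\<in>{..<N}. \<not> hc y}"
    (is "mrank (M + ?B) \<le> card ?R + card ?C + card ?L")
proof -
  define A1 where "A1 = mat N N (\<lambda>(x, y). if x \<in> ?R then \<Sum>t<N. P x t * Q t y else 0)"
  define A2 where "A2 = mat N N (\<lambda>(x, y). \<Sum>t\<in>?C. (if hr x then P x t else 0) * Q t y)"
  define A3 where "A3 = mat N N (\<lambda>(x, y).
      if y \<in> ?L then \<Sum>t<N. if hr x \<and> hm t then P x t * Q t y else 0 else 0)"
  have A1: "A1 \<in> carrier_mat N N" and A2: "A2 \<in> carrier_mat N N" and A3: "A3 \<in> carrier_mat N N"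
    by (auto simp: A1_def A2_def A3_def)
  have decomp: "M + ?B = A1 + A2 + A3"
  proof (rule eq_matI)
    fix x y assume "x < dim_row (A1 + A2 + A3)" "y < dim_col (A1 + A2 + A3)"
    then have x: "x < N" and y: "y < N" by (auto simp: A3_def)
    have "(M + ?B) $$ (x, y) = (\<Sum>t<N. P x t * Q t y
        - (if hr x \<and> hm t then P x t else 0) * (if hm t \<and> hc y then Q t y else 0))"
      using x y M M_eq by (simp add: sum_subtractf)
    also have "\<dots> = (\<Sum>t<N. (if \<not> hr x then P x t * Q t y else 0)
        + (if hr x \<and> \<not> hm t then P x t * Q t y else 0)
        + (if hr x \<and> hm t \<and> \<not> hc y then P x t * Q t y else 0))"
      by (rule sum.cong) auto
    also have "\<dots> = A1 $$ (x, y) + A2 $$ (x, y) + A3 $$ (x, y)"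
    proof -
      have "(\<Sum>t<N. if hr x \<and> \<not> hm t then P x t * Q t y else 0)
          = (\<Sum>t<N. if \<not> hm t then (if hr x then P x t else 0) * Q t y else 0)"
        by (rule sum.cong) auto
      also have "\<dots> = (\<Sum>t\<in>?C. (if hr x then P x t else 0) * Q t y)"
        by (rule sum.inter_filter[symmetric]) simp
      also have "\<dots> = A2 $$ (x, y)"
        using x y by (simp add: A2_def)
      finally show ?thesis
        using x y by (cases "hr x"; cases "hc y") (simp_all add: A1_def A3_def sum.distrib)
    qed
    also have "\<dots> = (A1 + A2 + A3) $$ (x, y)"
      using x y A1 A2 A3 by simp
    finally show "(M + ?B) $$ (x, y) = (A1 + A2 + A3) $$ (x, y)" .
  qed (use M A3 in auto)
  have "mrank A1 \<le> card ?R" "mrank A3 \<le> card ?L"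
    unfolding A1_def A3_def by (intro mrank_le_card_rows mrank_le_card_cols, simp)+
  moreover have "mrank A2 \<le> card ?C"
    unfolding A2_def by (rule mrank_sum_outer_products_le) simp
  ultimately show ?thesis unfolding decomp
    using mrank_add_le[OF add_carrier_mat[OF A2, of A1] A3] mrank_add_le[OF A1 A2] by linarith
qed

lemma card_nonzero_sum_mult_le:
  fixes A :: "nat \<Rightarrow> 'a::semiring_0" and B :: "nat \<Rightarrow> nat \<Rightarrow> 'a"
  assumes A: "card {t\<in>{..<N}. A t \<noteq> 0} \<le> s"
    and B: "\<And>t. t < N \<Longrightarrow> card {y\<in>{..<N}. B t y \<noteq> 0} \<le> s"
  shows "card {y\<in>{..<N}. (\<Sum>t<N. A t * B t y) \<noteq> 0} \<le> s\<^sup>2"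
proof -
  define T where "T = {t\<in>{..<N}. A t \<noteq> 0}"
  have "{y\<in>{..<N}. (\<Sum>t<N. A t * B t y) \<noteq> 0} \<subseteq> (\<Union>t\<in>T. {y\<in>{..<N}. B t y \<noteq> 0})"
  proof
    fix y assume y: "y \<in> {y\<in>{..<N}. (\<Sum>t<N. A t * B t y) \<noteq> 0}"
    then have "(\<Sum>t<N. A t * B t y) \<noteq> 0" by simp
    then obtain t where "t < N" "A t * B t y \<noteq> 0"
      using sum.not_neutral_contains_not_neutral by blast
    then show "y \<in> (\<Union>t\<in>T. {y\<in>{..<N}. B t y \<noteq> 0})" using y by (auto simp: T_def)
  qed
  then have "card {y\<in>{..<N}. (\<Sum>t<N. A t * B t y) \<noteq> 0} \<le> card (\<Union>t\<in>T. {y\<in>{..<N}. B t y \<noteq> 0})"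
    by (intro card_mono) (auto simp: T_def)
  also have "\<dots> \<le> (\<Sum>t\<in>T. card {y\<in>{..<N}. B t y \<noteq> 0})"
    by (rule card_UN_le) (simp add: T_def)
  also have "\<dots> \<le> (\<Sum>t\<in>T. s)"
    by (rule sum_mono) (use B in \<open>auto simp: T_def\<close>)
  also have "\<dots> \<le> s\<^sup>2"
    using A by (simp add: T_def power2_eq_square mult_right_mono)
  finally show ?thesis .
qed

lemma nnz_r_le:
  assumes "\<And>i. i < dim_row B \<Longrightarrow> card {j. j < dim_col B \<and> B $$ (i, j) \<noteq> 0} \<le> s"
  shows "nnz_r B \<le> s"
  unfolding nnz_r_def
proof (rule Max.boundedI)
  have "{card {j. j < dim_col B \<and> B $$ (i, j) \<noteq> 0} | i. i < dim_row B}
      = (\<lambda>i. card {j. j < dim_col B \<and> B $$ (i, j) \<noteq> 0}) ` {..<dim_row B}" by auto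
  then show "finite ({card {j. j < dim_col B \<and> B $$ (i, j) \<noteq> 0} | i. i < dim_row B} \<union> {0})"
    by simp
qed (use assms in auto)

lemma nnz_c_le:
  assumes "\<And>j. j < dim_col B \<Longrightarrow> card {i. i < dim_row B \<and> B $$ (i, j) \<noteq> 0} \<le> s"
  shows "nnz_c B \<le> s"
  unfolding nnz_c_def
proof (rule Max.boundedI)
  have "{card {i. i < dim_row B \<and> B $$ (i, j) \<noteq> 0} | j. j < dim_col B}
      = (\<lambda>j. card {i. i < dim_row B \<and> B $$ (i, j) \<noteq> 0}) ` {..<dim_col B}" by auto
  then show "finite ({card {i. i < dim_row B \<and> B $$ (i, j) \<noteq> 0} | j. j < dim_col B} \<union> {0})"
    by simp
qed (use assms in auto)

lemma nnz_neg_product_le: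
  fixes S1 S2 :: "nat \<Rightarrow> nat \<Rightarrow> 'a::comm_ring"
  assumes S1_row: "\<And>x. x < N \<Longrightarrow> card {t\<in>{..<N}. S1 x t \<noteq> 0} \<le> s"
    and S1_col: "\<And>t. t < N \<Longrightarrow> card {x\<in>{..<N}. S1 x t \<noteq> 0} \<le> s"
    and S2_row: "\<And>t. t < N \<Longrightarrow> card {y\<in>{..<N}. S2 t y \<noteq> 0} \<le> s"
    and S2_col: "\<And>y. y < N \<Longrightarrow> card {t\<in>{..<N}. S2 t y \<noteq> 0} \<le> s"
  defines "B \<equiv> mat N N (\<lambda>(x, y). - (\<Sum>t<N. S1 x t * S2 t y))"
  shows "nnz_r B \<le> s\<^sup>2" and "nnz_c B \<le> s\<^sup>2"
proof -
  show "nnz_r B \<le> s\<^sup>2"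
  proof (rule nnz_r_le)
    fix x assume "x < dim_row B"
    then have x: "x < N" by (simp add: B_def)
    have "{y. y < dim_col B \<and> B $$ (x, y) \<noteq> 0} = {y\<in>{..<N}. (\<Sum>t<N. S1 x t * S2 t y) \<noteq> 0}"
      using x by (auto simp: B_def)
    also have "card \<dots> \<le> s\<^sup>2"
      by (rule card_nonzero_sum_mult_le[OF S1_row[OF x] S2_row])
    finally show "card {y. y < dim_col B \<and> B $$ (x, y) \<noteq> 0} \<le> s\<^sup>2" .
  qed
  show "nnz_c B \<le> s\<^sup>2"
  proof (rule nnz_c_le)
    fix y assume "y < dim_col B"
    then have y: "y < N" by (simp add: B_def)
    have "{x. x < dim_row B \<and> B $$ (x, y) \<noteq> 0} = {x\<in>{..<N}. (\<Sum>t<N. S2 t y * S1 x t) \<noteq> 0}"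
      using y by (auto simp: B_def mult.commute)
    also have "card \<dots> \<le> s\<^sup>2"
      by (rule card_nonzero_sum_mult_le[OF S2_col[OF y] S1_col])
    finally show "card {x. x < dim_row B \<and> B $$ (x, y) \<noteq> 0} \<le> s\<^sup>2" .
  qed
qed

lemma rc_rigidity_le:
  assumes "B \<in> carrier_mat (dim_row M) (dim_col M)" and "mrank (M + B) \<le> r"
    and "nnz_r B \<le> s" and "nnz_c B \<le> s"
  shows "rc_rigidity M r \<le> s"
proof -
  have "rc_rigidity M r \<le> max (nnz_r B) (nnz_c B)"
    unfolding rc_rigidity_def using assms(1,2) by (intro cInf_lower) auto
  then show ?thesis using assms(3,4) by simp
qed

section \<open>Matrices factoring through disjoint agreement sets\<close>

lemma card_support_le_of_heavy_disjoint:
  assumes U: "U \<subseteq> {..<n}"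
    and G: "\<And>t. t < 2 ^ n \<Longrightarrow> G t \<noteq> 0 \<Longrightarrow>
      k \<le> card U \<and> k \<le> card (agree_set n d t) \<and> agree_set n d t \<inter> U = {}"
  shows "card {t\<in>{..<2 ^ n}. G t \<noteq> 0} \<le> binom_le (n - k) (int n - 2 * int k)"
proof (cases "k \<le> card U")
  case True
  have "card {t\<in>{..<2 ^ n}. G t \<noteq> 0}
      \<le> card {t\<in>{..<2 ^ n}. k \<le> card (agree_set n d t) \<and> agree_set n d t \<inter> U = {}}"
    by (rule card_mono) (use G in auto)
  also have "\<dots> \<le> binom_le (n - k) (int n - 2 * int k)"
    by (rule card_heavy_agree_set_disjoint_le[OF U True])
  finally show ?thesis .
next
  case False
  then have "{t\<in>{..<2 ^ n}. G t \<noteq> 0} = {}" using G by auto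
  then show ?thesis by (metis card.empty le0)
qed

theorem rc_rigidity_le_of_disjoint_factorization:
  fixes M :: "'a::field mat" and P Q :: "nat \<Rightarrow> nat \<Rightarrow> 'a"
  assumes M: "M \<in> carrier_mat (2 ^ n) (2 ^ n)"
    and M_eq: "\<And>x y. x < 2 ^ n \<Longrightarrow> y < 2 ^ n \<Longrightarrow> M $$ (x, y) = (\<Sum>t<2 ^ n. P x t * Q t y)"
    and P: "\<And>x t. x < 2 ^ n \<Longrightarrow> t < 2 ^ n \<Longrightarrow> P x t \<noteq> 0 \<Longrightarrow>
      agree_set n a x \<inter> agree_set n b t = {}"
    and Q: "\<And>t y. t < 2 ^ n \<Longrightarrow> y < 2 ^ n \<Longrightarrow> Q t y \<noteq> 0 \<Longrightarrow>
      agree_set n b t \<inter> agree_set n c y = {}"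
  shows "rc_rigidity M (4 * binom_lt n k) \<le> (binom_le (n - k) (int n - 2 * int k))\<^sup>2"
proof -
  define N :: nat where "N = 2 ^ n"
  define heavy where "heavy d x \<longleftrightarrow> k \<le> card (agree_set n d x)" for d x
  define S1 where "S1 x t = (if heavy a x \<and> heavy b t then P x t else 0)" for x t
  define S2 where "S2 t y = (if heavy b t \<and> heavy c y then Q t y else 0)" for t y
  define B where "B = mat N N (\<lambda>(x, y). - (\<Sum>t<N. S1 x t * S2 t y))"
  have light: "card {x\<in>{..<N}. \<not> heavy d x} = binom_lt n k" for d
    using card_agree_set_less[of n d k] by (simp add: N_def heavy_def not_le)
  have "mrank (M + B)
      \<le> card {x\<in>{..<N}. \<not> heavy a x} + card {t\<in>{..<N}. \<not> heavy b t} + card {y\<in>{..<N}. \<not> heavy c y}"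
    unfolding B_def S1_def S2_def
    by (rule mrank_product_minus_heavy_part_le) (use M M_eq in \<open>simp_all add: N_def\<close>)
  then have "mrank (M + B) \<le> 4 * binom_lt n k"
    unfolding light by simp
  moreover have "B \<in> carrier_mat (dim_row M) (dim_col M)"
    using M by (simp add: B_def N_def)
  moreover have "nnz_r B \<le> (binom_le (n - k) (int n - 2 * int k))\<^sup>2"
    and "nnz_c B \<le> (binom_le (n - k) (int n - 2 * int k))\<^sup>2"
    unfolding B_def N_def
    by (rule nnz_neg_product_le;
        rule card_support_le_of_heavy_disjoint[OF agree_set_subset];
        use P Q in \<open>auto simp: S1_def S2_def heavy_def split: if_splits\<close>; blast)+
  ultimately show ?thesis
    by (intro rc_rigidity_le)
qed

section \<open>The OR matrix\<close>

lemma sum_Pow_insert: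
  assumes "finite W" and "u \<notin> W"
  shows "(\<Sum>T\<in>Pow (insert u W). G T) = (\<Sum>T\<in>Pow W. G T) + (\<Sum>T\<in>Pow W. G (insert u T))"
proof -
  have "inj_on (insert u) (Pow W)"
    using assms(2) by (auto simp: inj_on_def)
  then show ?thesis
    unfolding Pow_insert using assms by (subst sum.union_disjoint) (auto simp: sum.reindex)
qed

lemma ex_subset_sum_representation:
  fixes F :: "'b set \<Rightarrow> 'a::ab_group_add"
  assumes "finite U"
  shows "\<exists>G. \<forall>W\<subseteq>U. F W = (\<Sum>T\<in>Pow W. G T)"
  using assms
proof (induction U arbitrary: F rule: finite_induct)
  case empty
  show ?case by (rule exI[of _ F]) auto
next
  case (insert u U)
  obtain G0 where G0: "\<forall>W\<subseteq>U. F W = (\<Sum>T\<in>Pow W. G0 T)"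
    using insert.IH by blast
  obtain G1 where G1: "\<forall>W\<subseteq>U. F (insert u W) - F W = (\<Sum>T\<in>Pow W. G1 T)"
    using insert.IH[of "\<lambda>W. F (insert u W) - F W"] by blast
  define G where "G T = (if u \<in> T then G1 (T - {u}) else G0 T)" for T
  have G_eq: "G T = G0 T" "G (insert u T) = G1 T" if "T \<subseteq> U" for T
  proof -
    have "u \<notin> T" using that insert.hyps(2) by blast
    then show "G T = G0 T" "G (insert u T) = G1 T" by (simp_all add: G_def)
  qed
  have "F W = (\<Sum>T\<in>Pow W. G T)" if W: "W \<subseteq> insert u U" for W
  proof (cases "u \<in> W")
    case False
    then have "W \<subseteq> U" using W by auto
    then show ?thesis using G0 G_eq(1) by (auto intro!: sum.cong)
  next
    case True
    define W0 where "W0 = W - {u}"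
    have W0: "W0 \<subseteq> U" "u \<notin> W0" "W = insert u W0"
      using W True insert.hyps by (auto simp: W0_def)
    have "(\<Sum>T\<in>Pow W. G T) = (\<Sum>T\<in>Pow W0. G T) + (\<Sum>T\<in>Pow W0. G (insert u T))"
      unfolding W0(3) using W0 insert.hyps(1) by (intro sum_Pow_insert) (auto intro: finite_subset)
    also have "\<dots> = (\<Sum>T\<in>Pow W0. G0 T) + (\<Sum>T\<in>Pow W0. G1 T)"
      using W0(1) G_eq by (auto intro!: sum.cong arg_cong2[where f = "(+)"])
    also have "\<dots> = F W"
      using G0 G1 W0 by (simp add: algebra_simps)
    finally show ?thesis ..
  qed
  then show ?case by blast
qed

lemma or_less_power2: "(x::nat) < 2 ^ n \<Longrightarrow> y < 2 ^ n \<Longrightarrow> or x y < 2 ^ n"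
  by (metis take_bit_nat_eq_self_iff take_bit_or)

text \<open>Writing f (x \<or> y) as a sum over the subsets T of the zero set of x \<or> y, the entry
  factors through the inner index t encoding T.\<close>
theorem rc_rigidity_V_mat_le:
  fixes f :: "nat \<Rightarrow> 'a::field"
  shows "rc_rigidity (V_mat n f) (4 * binom_lt n k) \<le> (binom_le (n - k) (int n - 2 * int k))\<^sup>2"
proof -
  define supp where "supp = agree_set n (\<lambda>_. True)"
  define F where "F W = f (the_inv_into {..<2 ^ n} supp ({..<n} - W))" for W
  obtain G where G: "\<forall>W\<subseteq>{..<n}. F W = (\<Sum>T\<in>Pow W. G T)"
    using ex_subset_sum_representation[of "{..<n}" F] by auto
  define P where "P x t = (if supp x \<inter> supp t = {} then G (supp t) else 0)" for x t
  define Q where "Q t y = (if supp t \<inter> supp y = {} then (1::'a) else 0)" for t y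
  show ?thesis
  proof (rule rc_rigidity_le_of_disjoint_factorization[where P = P and Q = Q
        and a = "\<lambda>_. True" and b = "\<lambda>_. True" and c = "\<lambda>_. True"])
    show "V_mat n f \<in> carrier_mat (2 ^ n) (2 ^ n)" by (simp add: V_mat_def)
  next
    fix x y :: nat assume x: "x < 2 ^ n" and y: "y < 2 ^ n"
    define W where "W = {..<n} - supp (or x y)"
    have supp_or: "supp (or x y) = supp x \<union> supp y"
      by (auto simp: supp_def agree_set_def bit_or_iff)
    have "{..<n} - W = supp (or x y)"
      using agree_set_subset by (auto simp: W_def supp_def)
    then have "F W = f (or x y)"
      using the_inv_into_f_f[OF inj_on_agree_set] or_less_power2[OF x y]
      by (simp add: F_def supp_def)
    then have "V_mat n f $$ (x, y) = (\<Sum>T\<in>Pow W. G T)"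
      using G x y by (simp add: V_mat_def W_def)
    also have "\<dots> = (\<Sum>t<2 ^ n. if supp t \<subseteq> W then G (supp t) else 0)"
      unfolding supp_def by (rule sum_Pow_eq_sum_agree_set) (simp add: W_def)
    also have "\<dots> = (\<Sum>t<2 ^ n. P x t * Q t y)"
    proof (rule sum.cong)
      fix t
      have "supp t \<subseteq> W \<longleftrightarrow> supp x \<inter> supp t = {} \<and> supp t \<inter> supp y = {}"
        using agree_set_subset[of n _ t] unfolding W_def supp_or by (auto simp: supp_def)
      then show "(if supp t \<subseteq> W then G (supp t) else 0) = P x t * Q t y"
        by (simp add: P_def Q_def)
    qed simp
    finally show "V_mat n f $$ (x, y) = (\<Sum>t<2 ^ n. P x t * Q t y)" .
  qed (auto simp: P_def Q_def supp_def split: if_splits)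
qed

section \<open>Kronecker products\<close>

lemma sum_lessThan_double:
  fixes F :: "nat \<Rightarrow> 'a::comm_monoid_add"
  shows "(\<Sum>z<2 * m. F z) = (\<Sum>t<m. F (2 * t) + F (2 * t + 1))"
  by (induction m) (simp_all add: algebra_simps)

lemma prod_sum_2_eq_sum_bits:
  fixes h :: "nat \<Rightarrow> nat \<Rightarrow> 'a::comm_semiring_1"
  shows "(\<Prod>i<n. \<Sum>b<2. h i b) = (\<Sum>t<2 ^ n. \<Prod>i<n. h i (of_bool (bit (t::nat) i)))"
proof (induction n arbitrary: h)
  case 0
  then show ?case by simp
next
  case (Suc n)
  have "(\<Prod>i<Suc n. \<Sum>b<2. h i b) = (\<Sum>b<2. h 0 b) * (\<Prod>i<n. \<Sum>b<2. h (Suc i) b)"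
    by (rule prod.lessThan_Suc_shift)
  also have "\<dots> = (\<Sum>b<2. h 0 b) * (\<Sum>t<2 ^ n. \<Prod>i<n. h (Suc i) (of_bool (bit (t::nat) i)))"
    using Suc.IH[of "\<lambda>i. h (Suc i)"] by simp
  also have "\<dots> = (\<Sum>t::nat<2 ^ n. h 0 0 * (\<Prod>i<n. h (Suc i) (of_bool (bit t i)))
                             + h 0 1 * (\<Prod>i<n. h (Suc i) (of_bool (bit t i))))"
    by (simp add: numeral_2_eq_2 sum_distrib_left sum_distrib_right sum.distrib algebra_simps)
  also have "\<dots> = (\<Sum>t::nat<2 ^ n. (\<Prod>i<Suc n. h i (of_bool (bit (2 * t) i)))
                             + (\<Prod>i<Suc n. h i (of_bool (bit (2 * t + 1) i))))"
    by (simp del: prod.lessThan_Suc add: prod.lessThan_Suc_shift bit_0 bit_Suc)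
  also have "\<dots> = (\<Sum>z::nat<2 ^ Suc n. \<Prod>i<Suc n. h i (of_bool (bit z i)))"
    using sum_lessThan_double[of "\<lambda>z. \<Prod>i<Suc n. h i (of_bool (bit z i))" "2 ^ n"] by simp
  finally show ?case .
qed

lemma kron_mat_carrier:
  assumes "A \<in> carrier_mat a b" and "B \<in> carrier_mat c d"
  shows "kron_mat A B \<in> carrier_mat (a * c) (b * d)"
  using assms unfolding kron_mat_def by simp

lemma kron_list_Cons: "kron_list (A # Ms) = kron_mat A (kron_list Ms)"
  by (simp add: kron_list_def)

lemma kron_list_carrier:
  assumes "\<forall>A\<in>set Ms. A \<in> carrier_mat 2 2"
  shows "kron_list Ms \<in> carrier_mat (2 ^ length Ms) (2 ^ length Ms)"
  using assms
proof (induction Ms)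
  case Nil
  then show ?case by (simp add: kron_list_def)
next
  case (Cons A Ms)
  then show ?case
    using kron_mat_carrier[of A 2 2 "kron_list Ms"] by (simp add: kron_list_Cons)
qed

lemma kron_list_entry:
  assumes "\<forall>A\<in>set Ms. A \<in> carrier_mat 2 2"
    and "(x::nat) < 2 ^ length Ms" and "(y::nat) < 2 ^ length Ms"
  shows "kron_list Ms $$ (x, y)
    = (\<Prod>i<length Ms. (rev Ms ! i) $$ (of_bool (bit x i), of_bool (bit y i)))"
  using assms
proof (induction Ms arbitrary: x y)
  case Nil
  then show ?case by (simp add: kron_list_def)
next
  case (Cons A Ms)
  define m where "m = length Ms"
  have A: "A \<in> carrier_mat 2 2" and K: "kron_list Ms \<in> carrier_mat (2 ^ m) (2 ^ m)"
    using Cons.prems(1) kron_list_carrier[of Ms] by (auto simp: m_def)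
  have high_bit: "z div 2 ^ m = of_bool (bit z m)" if "z < 2 ^ Suc m" for z :: nat
  proof -
    have "z div 2 ^ m < 2" using that by (simp add: less_mult_imp_div_less)
    then have "z div 2 ^ m = 0 \<or> z div 2 ^ m = 1" by auto
    then show ?thesis by (auto simp: bit_iff_odd)
  qed
  have low_bits: "bit (z mod 2 ^ m) i = bit z i" if "i < m" for z i :: nat
    using that by (simp add: bit_take_bit_iff flip: take_bit_eq_mod)
  have entry: "kron_list (A # Ms) $$ (x, y)
      = A $$ (x div 2 ^ m, y div 2 ^ m) * kron_list Ms $$ (x mod 2 ^ m, y mod 2 ^ m)"
    using A K Cons.prems(2,3) by (simp add: kron_list_Cons kron_mat_def m_def)
  have "kron_list Ms $$ (x mod 2 ^ m, y mod 2 ^ m)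
      = (\<Prod>i<m. (rev Ms ! i) $$ (of_bool (bit (x mod 2 ^ m) i), of_bool (bit (y mod 2 ^ m) i)))"
    using Cons.prems Cons.IH[of "x mod 2 ^ m" "y mod 2 ^ m"] by (simp add: m_def)
  also have "\<dots> = (\<Prod>i<m. (rev Ms ! i) $$ (of_bool (bit x i), of_bool (bit y i)))"
    by (rule prod.cong) (simp_all add: low_bits)
  finally have low: "kron_list Ms $$ (x mod 2 ^ m, y mod 2 ^ m)
      = (\<Prod>i<m. (rev Ms ! i) $$ (of_bool (bit x i), of_bool (bit y i)))" .
  have high: "A $$ (x div 2 ^ m, y div 2 ^ m) = A $$ (of_bool (bit x m), of_bool (bit y m))"
    using Cons.prems(2,3) high_bit[of x] high_bit[of y] by (simp add: m_def)
  have "rev (A # Ms) ! i = rev Ms ! i" if "i < m" for i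
    using that by (simp add: nth_append m_def)
  then have init: "(\<Prod>i<m. (rev (A # Ms) ! i) $$ (of_bool (bit x i), of_bool (bit y i)))
      = (\<Prod>i<m. (rev Ms ! i) $$ (of_bool (bit x i), of_bool (bit y i)))"
    by (intro prod.cong) simp_all
  have last: "rev (A # Ms) ! m = A" by (simp add: nth_append m_def)
  have "(\<Prod>i<Suc m. (rev (A # Ms) ! i) $$ (of_bool (bit x i), of_bool (bit y i)))
      = A $$ (of_bool (bit x m), of_bool (bit y m))
        * (\<Prod>i<m. (rev Ms ! i) $$ (of_bool (bit x i), of_bool (bit y i)))"
    unfolding prod.lessThan_Suc init last by (rule mult.commute)
  then show ?case
    unfolding entry low high length_Cons m_def[symmetric] by simp
qed

text \<open>Pivoting on a nonzero entry (r0, s0) gives an LU-type factorization: the second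
  column of p vanishes in row r0 and the second row of q vanishes in column s0.\<close>
lemma two_by_two_factorization:
  fixes m :: "nat \<Rightarrow> nat \<Rightarrow> 'a::field"
  obtains p q :: "nat \<Rightarrow> nat \<Rightarrow> 'a" and a c
  where "\<And>r s. r < 2 \<Longrightarrow> s < 2 \<Longrightarrow> m r s = (\<Sum>b<2. p r b * q b s)"
    and "\<And>r. r < 2 \<Longrightarrow> p r 1 \<noteq> 0 \<Longrightarrow> (r = 1) \<noteq> a"
    and "\<And>s. s < 2 \<Longrightarrow> q 1 s \<noteq> 0 \<Longrightarrow> (s = 1) \<noteq> c"
proof (cases "\<forall>r<2. \<forall>s<2. m r s = 0")
  case True
  show ?thesis by (rule that[of "\<lambda>_ _. 0" "\<lambda>_ _. 0"]) (use True in auto)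
next
  case False
  then obtain r0 s0 where r0: "r0 < 2" and s0: "s0 < 2" and d: "m r0 s0 \<noteq> 0" by auto
  define d where "d = m r0 s0"
  define p where "p r b = (if b = 0 then (if r = r0 then 1 else m r s0 / d)
                           else (if r = r0 then 0 else 1))" for r b :: nat
  define q where "q b s = (if b = 0 then m r0 s
                           else (if s = s0 then 0 else m (1 - r0) s - m (1 - r0) s0 * m r0 s / d))"
    for b s :: nat
  show ?thesis
  proof (rule that[of p q "r0 = 1" "s0 = 1"])
    fix r s :: nat assume r: "r < 2" and s: "s < 2"
    have "m r s = p r 0 * q 0 s + p r 1 * q 1 s"
    proof (cases "r = r0")
      case False
      then have "r = 1 - r0" using r r0 by auto
      then show ?thesis
        using False d s s0 by (cases "s = s0") (auto simp: p_def q_def d_def field_simps)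
    qed (simp add: p_def q_def)
    then show "m r s = (\<Sum>b<2. p r b * q b s)" by (simp add: numeral_2_eq_2)
  qed (use r0 s0 in \<open>auto simp: p_def q_def numeral_2_eq_2 less_Suc_eq\<close>)
qed

lemma two_by_two_factorizations:
  fixes m :: "'i \<Rightarrow> nat \<Rightarrow> nat \<Rightarrow> 'a::field"
  obtains p q :: "'i \<Rightarrow> nat \<Rightarrow> nat \<Rightarrow> 'a" and a c
  where "\<And>i r s. r < 2 \<Longrightarrow> s < 2 \<Longrightarrow> m i r s = (\<Sum>b<2. p i r b * q i b s)"
    and "\<And>i r. r < 2 \<Longrightarrow> p i r 1 \<noteq> 0 \<Longrightarrow> (r = 1) \<noteq> a i"
    and "\<And>i s. s < 2 \<Longrightarrow> q i 1 s \<noteq> 0 \<Longrightarrow> (s = 1) \<noteq> c i"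
proof -
  define factors :: "'i \<Rightarrow> bool \<Rightarrow> bool \<Rightarrow> (nat \<Rightarrow> nat \<Rightarrow> 'a) \<Rightarrow> (nat \<Rightarrow> nat \<Rightarrow> 'a) \<Rightarrow> bool"
    where "factors i a c p q \<longleftrightarrow> (\<forall>r<2. \<forall>s<2. m i r s = (\<Sum>b<2. p r b * q b s))
      \<and> (\<forall>r<2. p r 1 \<noteq> 0 \<longrightarrow> (r = 1) \<noteq> a) \<and> (\<forall>s<2. q 1 s \<noteq> 0 \<longrightarrow> (s = 1) \<noteq> c)"
    for i a c p q
  have "\<exists>a c p q. factors i a c p q" for i
    unfolding factors_def by (rule two_by_two_factorization[of "m i"]) blast
  then obtain a c p q where "\<And>i. factors i (a i) (c i) (p i) (q i)"
    by metis
  then show ?thesis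
    by (intro that[of p q a c]) (simp_all add: factors_def)
qed

lemma of_bool_less_2: "of_bool b < (2::nat)"
  by (cases b) simp_all

theorem rc_rigidity_kron_list_le:
  fixes Ms :: "'a::field mat list"
  assumes len: "length Ms = n" and Ms: "\<forall>A\<in>set Ms. A \<in> carrier_mat 2 2"
  shows "rc_rigidity (kron_list Ms) (4 * binom_lt n k) \<le> (binom_le (n - k) (int n - 2 * int k))\<^sup>2"
proof -
  obtain p q a c
    where pq: "\<And>i r s. r < 2 \<Longrightarrow> s < 2 \<Longrightarrow>
        (rev Ms ! i) $$ (r, s) = (\<Sum>b::nat<2. p i r b * q i b s)"
      and p: "\<And>i r. r < 2 \<Longrightarrow> p i r 1 \<noteq> 0 \<Longrightarrow> (r = 1) \<noteq> a i"
      and q: "\<And>i s. s < 2 \<Longrightarrow> q i 1 s \<noteq> 0 \<Longrightarrow> (s = 1) \<noteq> c i"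
    by (rule two_by_two_factorizations[of "\<lambda>i r s. (rev Ms ! i) $$ (r, s)"]) blast
  define P where "P x t = (\<Prod>i<n. p i (of_bool (bit x i)) (of_bool (bit t i)))" for x t :: nat
  define Q where "Q t y = (\<Prod>i<n. q i (of_bool (bit t i)) (of_bool (bit y i)))" for t y :: nat
  show ?thesis
  proof (rule rc_rigidity_le_of_disjoint_factorization[where P = P and Q = Q
        and a = a and b = "\<lambda>_. True" and c = c])
    show "kron_list Ms \<in> carrier_mat (2 ^ n) (2 ^ n)"
      using kron_list_carrier[OF Ms] len by simp
  next
    fix x y :: nat assume "x < 2 ^ n" and "y < 2 ^ n"
    then have "kron_list Ms $$ (x, y)
        = (\<Prod>i<n. (rev Ms ! i) $$ (of_bool (bit x i), of_bool (bit y i)))"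
      by (rule kron_list_entry[OF Ms, unfolded len])
    also have "\<dots> = (\<Prod>i<n. \<Sum>b<2. p i (of_bool (bit x i)) b * q i b (of_bool (bit y i)))"
      by (simp only: pq[OF of_bool_less_2 of_bool_less_2])
    also have "\<dots> = (\<Sum>t<2 ^ n. P x t * Q t y)"
      by (simp only: prod_sum_2_eq_sum_bits P_def Q_def prod.distrib)
    finally show "kron_list Ms $$ (x, y) = (\<Sum>t<2 ^ n. P x t * Q t y)" .
  next
    fix x t assume "P x t \<noteq> 0"
    then have nz: "p i (of_bool (bit x i)) (of_bool (bit t i)) \<noteq> 0" if "i < n" for i
      using that unfolding P_def prod_zero_iff[OF finite_lessThan] by blast
    show "agree_set n a x \<inter> agree_set n (\<lambda>_. True) t = {}"
    proof (rule ccontr)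
      assume "agree_set n a x \<inter> agree_set n (\<lambda>_. True) t \<noteq> {}"
      then obtain i where "i < n" "bit x i = a i" "bit t i" by (auto simp: agree_set_def)
      then show False using nz[of i] p[of "of_bool (bit x i)" i] by (cases "a i") auto
    qed
  next
    fix t y assume "Q t y \<noteq> 0"
    then have nz: "q i (of_bool (bit t i)) (of_bool (bit y i)) \<noteq> 0" if "i < n" for i
      using that unfolding Q_def prod_zero_iff[OF finite_lessThan] by blast
    show "agree_set n (\<lambda>_. True) t \<inter> agree_set n c y = {}"
    proof (rule ccontr)
      assume "agree_set n (\<lambda>_. True) t \<inter> agree_set n c y \<noteq> {}"
      then obtain i where "i < n" "bit y i = c i" "bit t i" by (auto simp: agree_set_def)
      then show False using nz[of i] q[of "of_bool (bit y i)" i] by (cases "c i") auto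
    qed
  qed
qed

theorem mainTheorem13:
  fixes n k :: nat and M :: "'a::field mat"
  assumes "1 \<le> n" and "1 \<le> k" and "k \<le> n"
    and "(\<exists>f :: nat \<Rightarrow> 'a. M = V_mat n f) \<or>
         (\<exists>Ms. length Ms = n \<and> (\<forall>A\<in>set Ms. A \<in> carrier_mat 2 2) \<and> M = kron_list Ms)"
  shows "rc_rigidity M (4 * binom_lt n k) \<le> (binom_le (n - k) (int n - 2 * int k))\<^sup>2"
  using assms(4) rc_rigidity_V_mat_le rc_rigidity_kron_list_le by blast

end
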